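(* Let $n\geq 1$ and let $C$ be an all-ones CRC in $G_n$ with covering radius $\rho\geq 2$, $c_1=1$ and $c_2=2$. Then there is a CRC $D$ in $H(2n,2)$ with the same parameter matrix such that $C=\{x\in\mathbb{Z}^n:(\tau(x_1\bmod 4),\ldots,\tau(x_n\bmod 4))\in D\}$.
   Context: $G_n$: vertex set $\mathbb{Z}^n$, $x\sim y$ iff $\sum_i|x_i-y_i|=1$. $H(2n,2)$: binary Hamming graph on $\{0,1\}^{2n}$. For a code $C$ with covering radius $\rho$, $C_i=\{v:d(v,C)=i\}$; $C$ is a CRC if for all $i,j$ every vertex of $C_i$ has the same number $\alpha_{ij}$ of neighbours in $C_j$, with $\alpha_{ij}=0$ for $|i-j|>1$; $a_i=\alpha_{ii}$, $c_i=\alpha_{i,i-1}$; parameter matrix $(\alpha_{ij})$. $C$ is all-ones if $a_i=1$ for all $i$. $\tau$ is the Gray map $\tau(0)=(00),\tau(1)=(10),\tau(2)=(11),\tau(3)=(01)$, applied coordinatewise and concatenated. *)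

theory Defs
  imports Main
begin

definition edges :: "'a set \<Rightarrow> ('a \<Rightarrow> 'a \<Rightarrow> bool) \<Rightarrow> ('a \<times> 'a) set" where
  "edges V adj = {(x, y). x \<in> V \<and> y \<in> V \<and> adj x y}"

definition dist_code :: "'a set \<Rightarrow> ('a \<Rightarrow> 'a \<Rightarrow> bool) \<Rightarrow> 'a set \<Rightarrow> 'a \<Rightarrow> nat" where
  "dist_code V adj C v = (LEAST k. \<exists>c\<in>C. (v, c) \<in> edges V adj ^^ k)"

definition is_CRC :: "'a set \<Rightarrow> ('a \<Rightarrow> 'a \<Rightarrow> bool) \<Rightarrow> 'a set \<Rightarrow> nat \<Rightarrow> (nat \<Rightarrow> nat \<Rightarrow> nat) \<Rightarrow> bool" where
  "is_CRC V adj C rho alpha \<longleftrightarrow>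
     C \<subseteq> V \<and> C \<noteq> {} \<and>
     (\<forall>v\<in>V. \<exists>k. \<exists>c\<in>C. (v, c) \<in> edges V adj ^^ k) \<and>
     (\<forall>v\<in>V. dist_code V adj C v \<le> rho) \<and>
     (\<exists>v\<in>V. dist_code V adj C v = rho) \<and>
     (\<forall>i\<le>rho. \<forall>j\<le>rho. \<forall>v\<in>V. dist_code V adj C v = i \<longrightarrow>
        card {w\<in>V. adj v w \<and> dist_code V adj C w = j} = alpha i j) \<and>
     (\<forall>i\<le>rho. \<forall>j\<le>rho. (i + 1 < j \<or> j + 1 < i) \<longrightarrow> alpha i j = 0)"

(* all-ones: a_i = alpha i i = 1 for all i *)
definition all_ones :: "nat \<Rightarrow> (nat \<Rightarrow> nat \<Rightarrow> nat) \<Rightarrow> bool" where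
  "all_ones rho alpha \<longleftrightarrow> (\<forall>i\<le>rho. alpha i i = 1)"

definition Gn_V :: "nat \<Rightarrow> int list set" where
  "Gn_V n = {x. length x = n}"

definition Gn_adj :: "int list \<Rightarrow> int list \<Rightarrow> bool" where
  "Gn_adj x y \<longleftrightarrow> length x = length y \<and> (\<Sum>i<length x. \<bar>x ! i - y ! i\<bar>) = 1"

definition H_V :: "nat \<Rightarrow> bool list set" where
  "H_V m = {x. length x = m}"

definition H_adj :: "bool list \<Rightarrow> bool list \<Rightarrow> bool" where
  "H_adj x y \<longleftrightarrow> length x = length y \<and> card {i. i < length x \<and> x ! i \<noteq> y ! i} = 1"

(* Gray map on Z_4, with 0 = False, 1 = True *)
definition gray :: "int \<Rightarrow> bool list" where
  "gray a = (if a = 0 then [False, False] else if a = 1 then [True, False]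
             else if a = 2 then [True, True] else [False, True])"

definition tau :: "int list \<Rightarrow> bool list" where
  "tau x = concat (map (\<lambda>a. gray (a mod 4)) x)"

end

theory Submission
  imports Defs
begin

(* The parameters say that every vertex has exactly one
   neighbour on its own level (a_i = 1), a vertex on level 1 has exactly one neighbour in C and
   a vertex on level 2 has exactly two neighbours on level 1. In particular every codeword z has
   a unique codeword neighbour z + \<sigma> e_p, and chasing these local constraints along the lines
   through z gives z + 4 e_i \<in> C for every i: C is a union of classes of Z^n modulo 4.
   The Gray map \<tau> only sees coordinates modulo 4, is onto, and maps the neighbours of x
   bijectively onto the neighbours of \<tau> x (Lee distance 1 is Hamming distance 1). Such a
   covering map of graphs preserves the distance to a saturated code and the number of
   neighbours on each level, so D = \<tau> C is completely regular with the same parameters and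
   C = \<tau>\<^sup>-\<^sup>1 D. *)

section \<open>Covering maps of graphs transport completely regular codes\<close>

lemma dist_code_eq_0_iff:
  assumes "\<forall>v\<in>V. \<exists>k. \<exists>c\<in>C. (v, c) \<in> edges V adj ^^ k" and "v \<in> V"
  shows "dist_code V adj C v = 0 \<longleftrightarrow> v \<in> C"
proof
  assume "dist_code V adj C v = 0"
  moreover have "\<exists>c\<in>C. (v, c) \<in> edges V adj ^^ dist_code V adj C v"
    unfolding dist_code_def by (rule LeastI_ex) (use assms in blast)
  ultimately show "v \<in> C" by auto
next
  assume "v \<in> C"
  then show "dist_code V adj C v = 0"
    unfolding dist_code_def by (intro Least_eq_0) auto
qed

lemma dist_code_le_adj:
  assumes "\<forall>v\<in>V. \<exists>k. \<exists>c\<in>C. (v, c) \<in> edges V adj ^^ k"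
    and "v \<in> V" "w \<in> V" "adj v w"
  shows "dist_code V adj C v \<le> dist_code V adj C w + 1"
proof -
  have "\<exists>c\<in>C. (w, c) \<in> edges V adj ^^ dist_code V adj C w"
    unfolding dist_code_def by (rule LeastI_ex) (use assms in blast)
  then obtain c where c: "c \<in> C" "(w, c) \<in> edges V adj ^^ dist_code V adj C w" ..
  have "(v, w) \<in> edges V adj" using assms by (simp add: edges_def)
  then have "(v, c) \<in> edges V adj ^^ Suc (dist_code V adj C w)"
    using c(2) by (rule relpow_Suc_I2)
  then have "dist_code V adj C v \<le> Suc (dist_code V adj C w)"
    using c(1) unfolding dist_code_def by (intro Least_le) blast
  then show ?thesis by simp
qed

locale graph_covering =
  fixes V1 :: "'a set" and adj1 :: "'a \<Rightarrow> 'a \<Rightarrow> bool"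
    and V2 :: "'b set" and adj2 :: "'b \<Rightarrow> 'b \<Rightarrow> bool"
    and \<phi> :: "'a \<Rightarrow> 'b"
  assumes image_eq: "\<phi> ` V1 = V2"
    and adj_hom: "x \<in> V1 \<Longrightarrow> y \<in> V1 \<Longrightarrow> adj1 x y \<Longrightarrow> adj2 (\<phi> x) (\<phi> y)"
    and adj_lift: "x \<in> V1 \<Longrightarrow> w \<in> V2 \<Longrightarrow> adj2 (\<phi> x) w \<Longrightarrow> \<exists>y\<in>V1. adj1 x y \<and> \<phi> y = w"
    and inj_on_nbrs: "x \<in> V1 \<Longrightarrow> inj_on \<phi> {y \<in> V1. adj1 x y}"
begin

lemma \<phi>_in_V2: "x \<in> V1 \<Longrightarrow> \<phi> x \<in> V2"
  using image_eq by blast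

lemma relpow_edges_map:
  "(x, c) \<in> edges V1 adj1 ^^ k \<Longrightarrow> (\<phi> x, \<phi> c) \<in> edges V2 adj2 ^^ k"
proof (induction k arbitrary: x)
  case (Suc k)
  then obtain y where y: "(x, y) \<in> edges V1 adj1" "(y, c) \<in> edges V1 adj1 ^^ k"
    using relpow_Suc_D2[OF Suc.prems] by blast
  from y(1) have "(\<phi> x, \<phi> y) \<in> edges V2 adj2"
    by (simp add: edges_def \<phi>_in_V2 adj_hom)
  then show ?case using Suc.IH[OF y(2)] by (rule relpow_Suc_I2)
qed simp

lemma relpow_edges_lift:
  "x \<in> V1 \<Longrightarrow> (\<phi> x, c') \<in> edges V2 adj2 ^^ k \<Longrightarrow> \<exists>c\<in>V1. (x, c) \<in> edges V1 adj1 ^^ k \<and> \<phi> c = c'"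
proof (induction k arbitrary: x)
  case (Suc k)
  obtain w where w: "(\<phi> x, w) \<in> edges V2 adj2" "(w, c') \<in> edges V2 adj2 ^^ k"
    using relpow_Suc_D2[OF Suc.prems(2)] by blast
  obtain y where y: "y \<in> V1" "adj1 x y" "\<phi> y = w"
    using adj_lift[of x w] w(1) Suc.prems(1) by (auto simp: edges_def)
  obtain c where c: "c \<in> V1" "(y, c) \<in> edges V1 adj1 ^^ k" "\<phi> c = c'"
    using Suc.IH[OF y(1)] w(2) y(3) by blast
  have "(x, y) \<in> edges V1 adj1" using y Suc.prems(1) by (simp add: edges_def)
  then have "(x, c) \<in> edges V1 adj1 ^^ Suc k" using c(2) by (rule relpow_Suc_I2)
  with c show ?case by blast
qed auto

context
  fixes C :: "'a set"
  assumes saturated: "C = {x \<in> V1. \<phi> x \<in> \<phi> ` C}"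
begin

lemma reaches_image_iff:
  assumes "x \<in> V1"
  shows "(\<exists>c'\<in>\<phi> ` C. (\<phi> x, c') \<in> edges V2 adj2 ^^ k) \<longleftrightarrow> (\<exists>c\<in>C. (x, c) \<in> edges V1 adj1 ^^ k)"
proof
  assume "\<exists>c'\<in>\<phi> ` C. (\<phi> x, c') \<in> edges V2 adj2 ^^ k"
  then obtain c' where c': "c' \<in> \<phi> ` C" "(\<phi> x, c') \<in> edges V2 adj2 ^^ k" by blast
  then obtain c where "c \<in> V1" "(x, c) \<in> edges V1 adj1 ^^ k" "\<phi> c = c'"
    using relpow_edges_lift assms by blast
  with c'(1) saturated show "\<exists>c\<in>C. (x, c) \<in> edges V1 adj1 ^^ k" by blast
qed (use relpow_edges_map in blast)

lemma dist_code_image: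
  "x \<in> V1 \<Longrightarrow> dist_code V2 adj2 (\<phi> ` C) (\<phi> x) = dist_code V1 adj1 C x"
  unfolding dist_code_def by (simp only: reaches_image_iff)

lemma card_level_nbrs_image:
  assumes "x \<in> V1"
  shows "card {w \<in> V2. adj2 (\<phi> x) w \<and> dist_code V2 adj2 (\<phi> ` C) w = j}
       = card {y \<in> V1. adj1 x y \<and> dist_code V1 adj1 C y = j}"
proof -
  have "{w \<in> V2. adj2 (\<phi> x) w \<and> dist_code V2 adj2 (\<phi> ` C) w = j}
      = \<phi> ` {y \<in> V1. adj1 x y \<and> dist_code V1 adj1 C y = j}"
  proof (intro equalityI subsetI)
    fix w assume "w \<in> {w \<in> V2. adj2 (\<phi> x) w \<and> dist_code V2 adj2 (\<phi> ` C) w = j}"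
    then show "w \<in> \<phi> ` {y \<in> V1. adj1 x y \<and> dist_code V1 adj1 C y = j}"
      using adj_lift[OF assms] dist_code_image by force
  qed (use assms \<phi>_in_V2 adj_hom dist_code_image in auto)
  moreover have "inj_on \<phi> {y \<in> V1. adj1 x y \<and> dist_code V1 adj1 C y = j}"
    by (rule inj_on_subset[OF inj_on_nbrs[OF assms]]) blast
  ultimately show ?thesis by (simp add: card_image)
qed

lemma is_CRC_image:
  assumes crc: "is_CRC V1 adj1 C rho alpha"
  shows "is_CRC V2 adj2 (\<phi> ` C) rho alpha"
  unfolding is_CRC_def
proof (intro conjI)
  let ?d = "dist_code V2 adj2 (\<phi> ` C)"
  show "\<phi> ` C \<subseteq> V2" "\<phi> ` C \<noteq> {}"
    using crc image_eq by (auto simp: is_CRC_def)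
  show "\<forall>v\<in>V2. \<exists>k. \<exists>c\<in>\<phi> ` C. (v, c) \<in> edges V2 adj2 ^^ k"
    using crc image_eq reaches_image_iff by (force simp: is_CRC_def)
  show "\<forall>v\<in>V2. ?d v \<le> rho"
    using crc image_eq dist_code_image by (force simp: is_CRC_def)
  show "\<exists>v\<in>V2. ?d v = rho"
  proof -
    obtain x where "x \<in> V1" "dist_code V1 adj1 C x = rho"
      using crc by (auto simp: is_CRC_def)
    then show ?thesis using \<phi>_in_V2 dist_code_image by metis
  qed
  show "\<forall>i\<le>rho. \<forall>j\<le>rho. \<forall>v\<in>V2. ?d v = i \<longrightarrow>
      card {w \<in> V2. adj2 v w \<and> ?d w = j} = alpha i j"
  proof (intro allI impI ballI)
    fix i j v assume ij: "i \<le> rho" "j \<le> rho" and v: "v \<in> V2" and dv: "?d v = i"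
    obtain x where x: "x \<in> V1" "v = \<phi> x"
      using v image_eq by blast
    then have "dist_code V1 adj1 C x = i"
      using dv dist_code_image by simp
    then have "card {y \<in> V1. adj1 x y \<and> dist_code V1 adj1 C y = j} = alpha i j"
      using crc ij x(1) unfolding is_CRC_def by blast
    then show "card {w \<in> V2. adj2 v w \<and> ?d w = j} = alpha i j"
      using x card_level_nbrs_image by simp
  qed
  show "\<forall>i\<le>rho. \<forall>j\<le>rho. i + 1 < j \<or> j + 1 < i \<longrightarrow> alpha i j = 0"
    using crc by (simp add: is_CRC_def)
qed

end

end

section \<open>The grid graph\<close>

lemma unit_cases: "\<bar>t\<bar> = 1 \<Longrightarrow> \<bar>s\<bar> = 1 \<Longrightarrow> t = s \<or> t = - s" for s t :: int
  by (auto simp: abs_if split: if_splits)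

lemma unit_neq_uminus: "\<bar>s\<bar> = 1 \<Longrightarrow> s \<noteq> - s" for s :: int
  by auto

definition shift :: "int list \<Rightarrow> nat \<Rightarrow> int \<Rightarrow> int list" where
  "shift x i a = x[i := x ! i + a]"

lemma length_shift [simp]: "length (shift x i a) = length x"
  by (simp add: shift_def)

lemma nth_shift: "j < length x \<Longrightarrow> shift x i a ! j = (if j = i then x ! j + a else x ! j)"
  by (simp add: shift_def nth_list_update)

lemma shift_0 [simp]: "shift x i 0 = x"
  by (simp add: shift_def)

lemma shift_shift_same [simp]: "shift (shift x i a) i b = shift x i (a + b)"
  by (cases "i < length x") (simp_all add: shift_def add.assoc list_update_beyond)

lemma shift_commute: "i \<noteq> j \<Longrightarrow> shift (shift x i a) j b = shift (shift x j b) i a"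
  by (simp add: shift_def list_update_swap)

lemma shift_eq_shift_iff:
  assumes "i < length x" "j < length x" "a \<noteq> 0"
  shows "shift x i a = shift x j b \<longleftrightarrow> i = j \<and> a = b"
proof
  assume eq: "shift x i a = shift x j b"
  then have "shift x i a ! i = shift x j b ! i" by simp
  with assms show "i = j \<and> a = b"
    by (auto simp: nth_shift split: if_splits)
qed simp

lemma Gn_adj_shift:
  assumes "i < length x" "\<bar>r\<bar> = 1"
  shows "Gn_adj x (shift x i r)"
proof -
  have "(\<Sum>k<length x. \<bar>x ! k - shift x i r ! k\<bar>) = (\<Sum>k<length x. if k = i then 1 else 0)"
    using assms by (intro sum.cong) (auto simp: nth_shift)
  also have "\<dots> = 1" using assms(1) by simp
  finally show ?thesis by (simp add: Gn_adj_def)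
qed

lemma Gn_adj_imp_shift:
  assumes "Gn_adj x y"
  obtains i r where "i < length x" "\<bar>r\<bar> = 1" "y = shift x i r"
proof -
  let ?t = "\<lambda>k. nat \<bar>x ! k - y ! k\<bar>"
  have "int (\<Sum>k<length x. ?t k) = 1"
    using assms by (auto simp: Gn_adj_def)
  then have "(\<Sum>k<length x. ?t k) = 1" by linarith
  then have "\<exists>i\<in>{..<length x}. ?t i = 1 \<and> (\<forall>k\<in>{..<length x}. i \<noteq> k \<longrightarrow> ?t k = 0)"
    by (simp only: sum_eq_1_iff[OF finite_lessThan])
  then obtain i where i: "i < length x" "?t i = 1" and others: "\<forall>k<length x. k \<noteq> i \<longrightarrow> ?t k = 0"
    by auto
  define r where "r = y ! i - x ! i"
  have "\<bar>r\<bar> = 1" using i(2) by (simp add: r_def abs_minus_commute)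
  moreover have "y = shift x i r"
    using assms others by (intro nth_equalityI) (auto simp: Gn_adj_def nth_shift r_def)
  ultimately show ?thesis using that i(1) by blast
qed

lemma Gn_adj_sym: "Gn_adj x y \<Longrightarrow> Gn_adj y x"
  by (auto simp: Gn_adj_def abs_minus_commute)

section \<open>The Gray map is a covering of the Hamming graph\<close>

definition hamming_dist :: "bool list \<Rightarrow> bool list \<Rightarrow> nat" where
  "hamming_dist u w = card {q. q < length u \<and> u ! q \<noteq> w ! q}"

lemma hamming_dist_Nil [simp]: "hamming_dist [] w = 0"
  by (simp add: hamming_dist_def)

lemma hamming_dist_Cons:
  "hamming_dist (a # u) (b # w) = (if a = b then 0 else 1) + hamming_dist u w"
proof -
  have "{q. q < length (a # u) \<and> (a # u) ! q \<noteq> (b # w) ! q}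
      = (if a = b then {} else {0}) \<union> Suc ` {q. q < length u \<and> u ! q \<noteq> w ! q}"
    by (auto simp: image_iff less_Suc_eq_0_disj)
  then show ?thesis
    by (simp add: hamming_dist_def card_image)
qed

lemma hamming_dist_append:
  "length u = length w \<Longrightarrow> hamming_dist (u @ u') (w @ w') = hamming_dist u w + hamming_dist u' w'"
  by (induction u w rule: list_induct2) (simp_all add: hamming_dist_Cons)

lemma hamming_dist_eq_0_iff:
  "length u = length w \<Longrightarrow> hamming_dist u w = 0 \<longleftrightarrow> u = w"
  by (auto simp: hamming_dist_def list_eq_iff_nth_eq)

lemma H_adj_iff_hamming_dist: "H_adj u w \<longleftrightarrow> length u = length w \<and> hamming_dist u w = 1"
  by (simp add: H_adj_def hamming_dist_def)

lemma length_gray [simp]: "length (gray a) = 2"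
  by (simp add: gray_def)

lemma tau_Nil [simp]: "tau [] = []"
  by (simp add: tau_def)

lemma tau_Cons [simp]: "tau (a # x) = gray (a mod 4) @ tau x"
  by (simp add: tau_def)

lemma length_tau [simp]: "length (tau x) = 2 * length x"
  by (induction x) auto

definition lee_dist :: "int \<Rightarrow> int \<Rightarrow> nat" where
  "lee_dist a b = hamming_dist (gray (a mod 4)) (gray (b mod 4))"

lemma lee_dist_eq:
  "lee_dist a b = (if (a - b) mod 4 = 0 then 0 else if (a - b) mod 4 = 2 then 2 else 1)"
proof -
  have "hamming_dist (gray u) (gray v) = (if (u - v) mod 4 = 0 then 0 else if (u - v) mod 4 = 2 then 2 else 1)"
    if "u \<in> {0, 1, 2, 3}" "v \<in> {0, 1, 2, 3}" for u v :: int
    using that by (auto simp: gray_def hamming_dist_Cons)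
  moreover have "a mod 4 \<in> {0, 1, 2, 3}" "b mod 4 \<in> {0, 1, 2, 3}" by auto
  moreover have "(a mod 4 - b mod 4) mod 4 = (a - b) mod 4"
    by (simp add: mod_diff_eq)
  ultimately show ?thesis
    unfolding lee_dist_def by metis
qed

lemma lee_dist_eq_0_iff: "lee_dist a b = 0 \<longleftrightarrow> a mod 4 = b mod 4"
  by (simp add: lee_dist_eq mod_eq_dvd_iff dvd_eq_mod_eq_0)

lemma hamming_dist_tau:
  "length x = length y \<Longrightarrow> hamming_dist (tau x) (tau y) = (\<Sum>k<length x. lee_dist (x ! k) (y ! k))"
  by (induction x y rule: list_induct2)
     (simp_all add: hamming_dist_append lee_dist_def sum.lessThan_Suc_shift del: sum.lessThan_Suc)

lemma tau_eq_iff: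
  "length x = length y \<Longrightarrow> tau x = tau y \<longleftrightarrow> (\<forall>k<length x. x ! k mod 4 = y ! k mod 4)"
  by (simp add: hamming_dist_eq_0_iff[symmetric] hamming_dist_tau lee_dist_eq_0_iff Ball_def)

lemma H_adj_tau_iff:
  "length x = length y \<Longrightarrow> H_adj (tau x) (tau y) \<longleftrightarrow> (\<Sum>k<length x. lee_dist (x ! k) (y ! k)) = 1"
  by (simp add: H_adj_iff_hamming_dist hamming_dist_tau)

lemma gray_surj: "\<exists>a. gray (a mod 4) = [b1, b2]"
  by (cases b1; cases b2)
     (rule exI[of _ 0] exI[of _ 1] exI[of _ 2] exI[of _ 3], simp add: gray_def)+

lemma tau_surj: "length w = 2 * m \<Longrightarrow> \<exists>y. length y = m \<and> tau y = w"
proof (induction m arbitrary: w)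
  case (Suc m)
  then obtain b1 b2 w' where w: "w = b1 # b2 # w'" "length w' = 2 * m"
    by (metis Suc_length_conv mult_Suc_right add_2_eq_Suc)
  obtain y where "length y = m" "tau y = w'"
    using Suc.IH w(2) by blast
  moreover obtain a where "gray (a mod 4) = [b1, b2]"
    using gray_surj by blast
  ultimately show ?case
    using w(1) by (intro exI[of _ "a # y"]) simp
qed simp

lemma lee_dist_shift:
  assumes "k < length x" "\<bar>r\<bar> = 1"
  shows "lee_dist (x ! k) (shift x i r ! k) = (if k = i then 1 else 0)"
proof -
  have "(- r) mod 4 \<noteq> 0 \<and> (- r) mod 4 \<noteq> 2"
    using assms(2) by (auto simp: abs_if split: if_splits)
  then show ?thesis
    using assms(1) by (simp add: nth_shift lee_dist_eq)
qed

lemma Gn_adj_imp_H_adj_tau: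
  assumes "Gn_adj x y"
  shows "H_adj (tau x) (tau y)"
proof -
  obtain i r where ir: "i < length x" "\<bar>r\<bar> = 1" "y = shift x i r"
    using Gn_adj_imp_shift[OF assms] .
  have "(\<Sum>k<length x. lee_dist (x ! k) (y ! k)) = (\<Sum>k<length x. if k = i then 1 else 0)"
    using ir by (intro sum.cong) (simp_all add: lee_dist_shift)
  also have "\<dots> = 1"
    using ir(1) by simp
  finally show ?thesis
    using ir(3) by (simp add: H_adj_tau_iff)
qed

lemma H_adj_tau_lift:
  assumes x: "length x = n" and w: "length w = 2 * n" and adj: "H_adj (tau x) w"
  obtains y where "Gn_adj x y" "tau y = w"
proof -
  obtain y' where y': "length y' = n" "tau y' = w"
    using tau_surj[OF w] by blast
  have "(\<Sum>k<n. lee_dist (x ! k) (y' ! k)) = 1"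
    using H_adj_tau_iff[of x y'] adj x y' by simp
  then have "\<exists>i\<in>{..<n}. lee_dist (x ! i) (y' ! i) = 1 \<and> (\<forall>k\<in>{..<n}. i \<noteq> k \<longrightarrow> lee_dist (x ! k) (y' ! k) = 0)"
    by (simp only: sum_eq_1_iff[OF finite_lessThan])
  then obtain i where i: "i < n" "lee_dist (x ! i) (y' ! i) = 1"
    and others: "\<forall>k<n. k \<noteq> i \<longrightarrow> x ! k mod 4 = y' ! k mod 4"
    by (auto simp: lee_dist_eq_0_iff)
  have "(x ! i - y' ! i) mod 4 \<in> {1, 3}"
    using i(2) pos_mod_bound[of 4 "x ! i - y' ! i"] pos_mod_sign[of 4 "x ! i - y' ! i"]
    by (auto simp: lee_dist_eq split: if_splits)
  then obtain r where r: "\<bar>r\<bar> = 1" "(x ! i + r) mod 4 = y' ! i mod 4"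
  proof (elim insertE)
    assume "(x ! i - y' ! i) mod 4 = 1"
    then have "(x ! i + -1) mod 4 = y' ! i mod 4" by presburger
    then show thesis by (rule that[rotated]) simp
  next
    assume "(x ! i - y' ! i) mod 4 = 3"
    then have "(x ! i + 1) mod 4 = y' ! i mod 4" by presburger
    then show thesis by (rule that[rotated]) simp
  qed simp
  have "tau (shift x i r) = tau y'"
    using others r(2) x y' by (subst tau_eq_iff) (auto simp: nth_shift)
  moreover have "Gn_adj x (shift x i r)"
    using i(1) x r(1) by (intro Gn_adj_shift) simp_all
  ultimately show ?thesis
    using that y'(2) by blast
qed

lemma tau_inj_on_Gn_nbrs: "inj_on tau {y. Gn_adj x y}"
proof (rule inj_onI)
  fix y1 y2 assume "y1 \<in> {y. Gn_adj x y}" "y2 \<in> {y. Gn_adj x y}" and eq: "tau y1 = tau y2"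
  then obtain i1 r1 i2 r2 where
    y1: "i1 < length x" "\<bar>r1\<bar> = 1" "y1 = shift x i1 r1" and
    y2: "i2 < length x" "\<bar>r2\<bar> = 1" "y2 = shift x i2 r2"
    using Gn_adj_imp_shift by (metis mem_Collect_eq)
  have "\<forall>k<length x. y1 ! k mod 4 = y2 ! k mod 4"
    using eq y1 y2 tau_eq_iff[of y1 y2] by simp
  then have "y1 ! i1 mod 4 = y2 ! i1 mod 4"
    using y1(1) by blast
  then have "(x ! i1 + r1) mod 4 = (if i1 = i2 then x ! i1 + r2 else x ! i1) mod 4"
    using y1 y2 by (simp add: nth_shift)
  then have "i1 = i2 \<and> r1 = r2"
    using y1(2) y2(2) by (auto simp: abs_if split: if_splits; presburger)
  then show "y1 = y2" using y1 y2 by simp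
qed

lemma tau_graph_covering: "graph_covering (Gn_V n) Gn_adj (H_V (2 * n)) H_adj tau"
proof
  show "tau ` Gn_V n = H_V (2 * n)"
  proof (intro equalityI subsetI)
    fix w assume "w \<in> H_V (2 * n)"
    then obtain y where "length y = n" "tau y = w"
      using tau_surj[of w n] by (auto simp: H_V_def)
    then show "w \<in> tau ` Gn_V n" by (auto simp: Gn_V_def)
  qed (auto simp: Gn_V_def H_V_def)
  show "H_adj (tau x) (tau y)" if "Gn_adj x y" for x y
    using Gn_adj_imp_H_adj_tau[OF that] .
  show "\<exists>y\<in>Gn_V n. Gn_adj x y \<and> tau y = w"
    if x: "x \<in> Gn_V n" and w: "w \<in> H_V (2 * n)" and adj: "H_adj (tau x) w" for x w
  proof -
    have "length x = n" "length w = 2 * n"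
      using x w by (simp_all add: Gn_V_def H_V_def)
    then obtain y where "Gn_adj x y" "tau y = w"
      using H_adj_tau_lift adj by blast
    moreover from this(1) have "y \<in> Gn_V n"
      using x by (simp add: Gn_V_def Gn_adj_def)
    ultimately show ?thesis by blast
  qed
  show "inj_on tau {y \<in> Gn_V n. Gn_adj x y}" for x
    by (rule inj_on_subset[OF tau_inj_on_Gn_nbrs]) blast
qed

section \<open>Periodicity of the code modulo 4\<close>

locale grid_CRC =
  fixes n :: nat and C :: "int list set" and rho :: nat and alpha :: "nat \<Rightarrow> nat \<Rightarrow> nat"
  assumes crc: "is_CRC (Gn_V n) Gn_adj C rho alpha"
    and all_ones: "all_ones rho alpha"
    and rho_ge_2: "rho \<ge> 2"
    and c1: "alpha 1 0 = 1"
    and c2: "alpha 2 1 = 2"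
begin

abbreviation \<delta> :: "int list \<Rightarrow> nat" where
  "\<delta> \<equiv> dist_code (Gn_V n) Gn_adj C"

definition level_steps :: "int list \<Rightarrow> nat \<Rightarrow> (nat \<times> int) set" where
  "level_steps x j = {(i, r). i < n \<and> \<bar>r\<bar> = 1 \<and> \<delta> (shift x i r) = j}"

lemma alpha_diag: "i \<le> rho \<Longrightarrow> alpha i i = 1"
  using all_ones by (simp add: all_ones_def)

lemma C_subset: "C \<subseteq> Gn_V n"
  using crc by (simp add: is_CRC_def)

lemma shift_in_Gn_V [simp]: "shift x i a \<in> Gn_V n \<longleftrightarrow> x \<in> Gn_V n"
  by (simp add: Gn_V_def)

lemma reaches_C: "\<forall>v\<in>Gn_V n. \<exists>k. \<exists>c\<in>C. (v, c) \<in> edges (Gn_V n) Gn_adj ^^ k"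
  using crc by (simp add: is_CRC_def)

lemma \<delta>_eq_0_iff: "x \<in> Gn_V n \<Longrightarrow> \<delta> x = 0 \<longleftrightarrow> x \<in> C"
  by (rule dist_code_eq_0_iff[OF reaches_C])

lemma \<delta>_codeword [simp]: "z \<in> C \<Longrightarrow> \<delta> z = 0"
  using \<delta>_eq_0_iff C_subset by blast

lemma \<delta>_le_rho: "x \<in> Gn_V n \<Longrightarrow> \<delta> x \<le> rho"
  using crc by (simp add: is_CRC_def)

lemma \<delta>_shift_bounds:
  assumes "x \<in> Gn_V n" "i < n" "\<bar>r\<bar> = 1"
  shows "\<delta> (shift x i r) \<le> \<delta> x + 1" "\<delta> x \<le> \<delta> (shift x i r) + 1"
proof -
  have adj: "Gn_adj x (shift x i r)"
    using assms by (intro Gn_adj_shift) (auto simp: Gn_V_def)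
  show "\<delta> (shift x i r) \<le> \<delta> x + 1" "\<delta> x \<le> \<delta> (shift x i r) + 1"
    using dist_code_le_adj[OF reaches_C] adj Gn_adj_sym assms(1) by auto
qed

lemma level_stepsI: "i < n \<Longrightarrow> \<bar>r\<bar> = 1 \<Longrightarrow> \<delta> (shift x i r) = j \<Longrightarrow> (i, r) \<in> level_steps x j"
  by (simp add: level_steps_def)

lemma finite_level_steps: "finite (level_steps x j)"
proof (rule finite_subset)
  show "level_steps x j \<subseteq> {..<n} \<times> {-1, 1}"
    by (auto simp: level_steps_def abs_if split: if_splits)
qed simp

lemma card_level_steps:
  assumes "x \<in> Gn_V n" "j \<le> rho"
  shows "card (level_steps x j) = alpha (\<delta> x) j"
proof -
  have len: "length x = n" using assms(1) by (simp add: Gn_V_def)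
  have "(\<lambda>(i, r). shift x i r) ` level_steps x j = {w \<in> Gn_V n. Gn_adj x w \<and> \<delta> w = j}"
  proof (intro equalityI subsetI)
    fix w assume "w \<in> {w \<in> Gn_V n. Gn_adj x w \<and> \<delta> w = j}"
    then obtain i r where "i < n" "\<bar>r\<bar> = 1" "w = shift x i r" "\<delta> w = j"
      using len Gn_adj_imp_shift by blast
    then show "w \<in> (\<lambda>(i, r). shift x i r) ` level_steps x j"
      by (force simp: level_steps_def)
  qed (use assms(1) in \<open>auto simp: level_steps_def Gn_V_def intro: Gn_adj_shift\<close>)
  moreover have "inj_on (\<lambda>(i, r). shift x i r) (level_steps x j)"
  proof (rule inj_onI, clarify)
    fix i r i' r' assume "(i, r) \<in> level_steps x j" "(i', r') \<in> level_steps x j"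
      and "shift x i r = shift x i' r'"
    then show "i = i' \<and> r = r'"
      using len shift_eq_shift_iff[of i x i' r r'] by (auto simp: level_steps_def)
  qed
  ultimately have "card (level_steps x j) = card {w \<in> Gn_V n. Gn_adj x w \<and> \<delta> w = j}"
    by (metis card_image)
  also have "\<dots> = alpha (\<delta> x) j"
    using crc assms \<delta>_le_rho by (simp add: is_CRC_def)
  finally show ?thesis .
qed

lemma level_step_unique:
  assumes "x \<in> Gn_V n" "j \<le> rho" "alpha (\<delta> x) j = 1"
    and "(i, r) \<in> level_steps x j" "(i', r') \<in> level_steps x j"
  shows "i' = i \<and> r' = r"
proof -
  have "card (level_steps x j) = 1"
    using card_level_steps[OF assms(1,2)] assms(3) by simp
  then obtain s where "level_steps x j = {s}"
    by (rule card_1_singletonE)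
  with assms(4,5) show ?thesis by auto
qed

lemma same_level_step_unique:
  assumes "x \<in> Gn_V n" "i < n" "\<bar>r\<bar> = 1" "\<delta> (shift x i r) = \<delta> x"
    and "i' < n" "\<bar>r'\<bar> = 1" "\<delta> (shift x i' r') = \<delta> x"
  shows "i' = i \<and> r' = r"
  using assms alpha_diag \<delta>_le_rho
  by (intro level_step_unique[of x "\<delta> x"]) (auto simp: level_steps_def)

lemma level_step_exists:
  assumes "x \<in> Gn_V n" "j \<le> rho" "alpha (\<delta> x) j \<ge> 1"
  obtains i r where "i < n" "\<bar>r\<bar> = 1" "\<delta> (shift x i r) = j"
proof -
  have "level_steps x j \<noteq> {}"
    using card_level_steps[OF assms(1,2)] assms(3) by auto
  then show ?thesis using that by (auto simp: level_steps_def)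
qed

lemma forced_line_step:
  assumes "x \<in> Gn_V n" "p < n" "\<bar>\<sigma>\<bar> = 1" "j \<le> rho" "alpha (\<delta> x) j \<ge> 1"
    and "\<delta> (shift x p \<sigma>) \<noteq> j"
    and "\<And>l t. l < n \<Longrightarrow> l \<noteq> p \<Longrightarrow> \<bar>t\<bar> = 1 \<Longrightarrow> \<delta> (shift x l t) \<noteq> j"
  shows "\<delta> (shift x p (- \<sigma>)) = j"
proof -
  obtain l t where l: "l < n" "\<bar>t\<bar> = 1" "\<delta> (shift x l t) = j"
    using level_step_exists[OF assms(1,4,5)] .
  with assms(7) have "l = p" by blast
  moreover have "t = - \<sigma>"
    using unit_cases[OF l(2) assms(3)] l(3) assms(6) \<open>l = p\<close> by auto
  ultimately show ?thesis using l(3) by simp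
qed

(* Neither side is on the level of v, since the same-level neighbours of v and of v + \<sigma> e_p are
   each other; so both equal \<delta> v \<plusminus> 1, and being adjacent they agree. *)
lemma \<delta>_shift_across_level_edge:
  assumes v: "v \<in> Gn_V n" and p: "p < n" "\<bar>\<sigma>\<bar> = 1" and level: "\<delta> (shift v p \<sigma>) = \<delta> v"
    and j: "j < n" "j \<noteq> p" "\<bar>t\<bar> = 1"
  shows "\<delta> (shift (shift v p \<sigma>) j t) = \<delta> (shift v j t)"
proof -
  let ?u = "shift v p \<sigma>"
  have "\<delta> (shift v j t) \<noteq> \<delta> v"
    using same_level_step_unique[OF v p level j(1,3)] j(2) by blast
  moreover have "\<delta> (shift ?u j t) \<noteq> \<delta> ?u"
  proof
    assume "\<delta> (shift ?u j t) = \<delta> ?u"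
    moreover have "\<delta> (shift ?u p (- \<sigma>)) = \<delta> ?u" using level by simp
    ultimately show False
      using same_level_step_unique[of ?u p "- \<sigma>" j t] v p j by auto
  qed
  moreover have "shift ?u j t = shift (shift v j t) p \<sigma>"
    using j(2) by (simp add: shift_commute)
  then have "\<delta> (shift ?u j t) \<le> \<delta> (shift v j t) + 1" "\<delta> (shift v j t) \<le> \<delta> (shift ?u j t) + 1"
    using \<delta>_shift_bounds[of "shift v j t" p \<sigma>] v p by simp_all
  moreover have "\<delta> (shift ?u j t) \<le> \<delta> ?u + 1" "\<delta> ?u \<le> \<delta> (shift ?u j t) + 1"
    using \<delta>_shift_bounds[of ?u j t] v j by simp_all
  ultimately show ?thesis
    using \<delta>_shift_bounds[OF v j(1,3)] level by linarith
qed

end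

locale grid_CRC_pair = grid_CRC +
  fixes z :: "int list" and p :: nat and \<sigma> :: int
  assumes z_in_C: "z \<in> C" and p_less_n: "p < n" and \<sigma>_unit: "\<bar>\<sigma>\<bar> = 1"
    and partner_in_C: "shift z p \<sigma> \<in> C"
begin

lemma z_in_Gn_V: "z \<in> Gn_V n"
  using z_in_C C_subset by blast

lemma \<delta>_near_pair:
  assumes "l < n" "\<bar>t\<bar> = 1" "(l, t) \<noteq> (p, \<sigma>)"
  shows "\<delta> (shift z l t) = 1"
proof -
  have "\<delta> (shift z l t) \<noteq> 0"
  proof
    assume "\<delta> (shift z l t) = 0"
    then have "l = p \<and> t = \<sigma>"
      using same_level_step_unique[OF z_in_Gn_V p_less_n \<sigma>_unit _ assms(1,2)] z_in_C partner_in_C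
      by simp
    with assms(3) show False by simp
  qed
  moreover have "\<delta> (shift z l t) \<le> 1"
    using \<delta>_shift_bounds[OF z_in_Gn_V assms(1,2)] z_in_C by simp
  ultimately show ?thesis by simp
qed

lemma \<delta>_near_partner:
  assumes "l < n" "l \<noteq> p" "\<bar>t\<bar> = 1"
  shows "\<delta> (shift (shift z p \<sigma>) l t) = 1"
  using \<delta>_shift_across_level_edge[OF z_in_Gn_V p_less_n \<sigma>_unit _ assms] \<delta>_near_pair[of l t]
    assms z_in_C partner_in_C by simp

lemma \<delta>_off_line_behind_pair:
  assumes l: "l < n" "l \<noteq> p" "\<bar>t\<bar> = 1"
  shows "\<delta> (shift (shift z p (- \<sigma>)) l t) = 2"
proof -
  let ?a = "shift z p (- \<sigma>)"
  have a: "?a \<in> Gn_V n" "\<delta> ?a = 1"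
    using z_in_Gn_V \<delta>_near_pair[OF p_less_n, of "- \<sigma>"] \<sigma>_unit unit_neq_uminus[OF \<sigma>_unit] by auto
  have "\<delta> (shift ?a l t) \<noteq> 0"
  proof
    assume "\<delta> (shift ?a l t) = 0"
    moreover have "\<delta> (shift ?a p \<sigma>) = 0" using z_in_C by simp
    ultimately have "(p, \<sigma>) \<in> level_steps ?a 0" "(l, t) \<in> level_steps ?a 0"
      using l p_less_n \<sigma>_unit by (simp_all add: level_steps_def)
    then have "l = p"
      using level_step_unique[OF a(1) le0, of p \<sigma> l t] a(2) c1 by simp
    with l(2) show False ..
  qed
  moreover have "\<delta> (shift ?a l t) \<noteq> 1"
  proof
    assume "\<delta> (shift ?a l t) = 1"
    let ?b = "shift z l t"
    have b: "?b \<in> Gn_V n" "\<delta> ?b = 1"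
      using z_in_Gn_V \<delta>_near_pair[OF l(1,3)] l(2) by auto
    have "shift ?b p (- \<sigma>) = shift ?a l t" "shift ?b p \<sigma> = shift (shift z p \<sigma>) l t"
      using l(2) by (simp_all add: shift_commute)
    then have "\<delta> (shift ?b p (- \<sigma>)) = \<delta> ?b" "\<delta> (shift ?b p \<sigma>) = \<delta> ?b"
      using \<open>\<delta> (shift ?a l t) = 1\<close> \<delta>_near_partner[OF l] b(2) by simp_all
    then have "- \<sigma> = \<sigma>"
      using same_level_step_unique[OF b(1) p_less_n \<sigma>_unit _ p_less_n, of "- \<sigma>"] \<sigma>_unit
      by (simp only: abs_minus)
    with unit_neq_uminus[OF \<sigma>_unit] show False by simp
  qed
  moreover have "\<delta> (shift ?a l t) \<le> 2"
    using \<delta>_shift_bounds[OF a(1) l(1,3)] a(2) by simp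
  ultimately show ?thesis by simp
qed

(* Along the line through the pair, the distances behind z are 1, 1, 0, 0. *)
lemma codewords_behind_pair: "shift z p (-3 * \<sigma>) \<in> C" "shift z p (-4 * \<sigma>) \<in> C"
proof -
  define a where "a = shift z p (- \<sigma>)"
  define b where "b = shift a p (- \<sigma>)"
  define c where "c = shift b p (- \<sigma>)"
  have V: "a \<in> Gn_V n" "b \<in> Gn_V n" "c \<in> Gn_V n"
    using z_in_Gn_V by (simp_all add: a_def b_def c_def)
  have undo: "shift a p \<sigma> = z" "shift b p \<sigma> = a" "shift c p \<sigma> = b"
    by (simp_all add: a_def b_def c_def)
  have \<delta>a: "\<delta> a = 1"
    unfolding a_def using \<delta>_near_pair[OF p_less_n, of "- \<sigma>"] \<sigma>_unit unit_neq_uminus[OF \<sigma>_unit] by simp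
  have a_off: "\<delta> (shift a l t) = 2" if "l < n" "l \<noteq> p" "\<bar>t\<bar> = 1" for l t
    unfolding a_def using \<delta>_off_line_behind_pair[OF that] .
  have \<delta>b: "\<delta> b = 1"
    unfolding b_def
    by (rule forced_line_step[OF V(1) p_less_n \<sigma>_unit])
       (use rho_ge_2 in \<open>simp_all add: \<delta>a a_off undo alpha_diag z_in_C\<close>)
  have b_off: "\<delta> (shift b l t) = 2" if "l < n" "l \<noteq> p" "\<bar>t\<bar> = 1" for l t
    using \<delta>_shift_across_level_edge[OF V(1) p_less_n _ _ that, of "- \<sigma>"] \<sigma>_unit \<delta>a \<delta>b a_off[OF that]
    unfolding b_def by simp
  have \<delta>c: "\<delta> c = 0"
    unfolding c_def
    by (rule forced_line_step[OF V(2) p_less_n \<sigma>_unit])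
       (use rho_ge_2 c1 in \<open>simp_all add: \<delta>a \<delta>b b_off undo\<close>)
  have c_off: "\<delta> (shift c l t) \<noteq> 0" if "l < n" "l \<noteq> p" "\<bar>t\<bar> = 1" for l t
  proof -
    have "shift c l t = shift (shift b l t) p (- \<sigma>)"
      using that(2) by (simp add: c_def shift_commute)
    then show ?thesis
      using \<delta>_shift_bounds[of "shift b l t" p "- \<sigma>"] V(2) p_less_n \<sigma>_unit b_off[OF that] by simp
  qed
  have "\<delta> (shift c p (- \<sigma>)) = 0"
    by (rule forced_line_step[OF V(3) p_less_n \<sigma>_unit])
       (simp_all add: \<delta>b \<delta>c c_off undo alpha_diag)
  moreover have "c = shift z p (-3 * \<sigma>)" "shift c p (- \<sigma>) = shift z p (-4 * \<sigma>)"
    by (simp_all add: a_def b_def c_def algebra_simps)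
  ultimately show "shift z p (-3 * \<sigma>) \<in> C" "shift z p (-4 * \<sigma>) \<in> C"
    using \<delta>c V(3) \<delta>_eq_0_iff by auto
qed

(* Along a line through z transversal to the pair, the distances are 1, 2, 1, 0. *)
context
  fixes i :: nat and s :: int
  assumes i_less_n: "i < n" and i_neq_p: "i \<noteq> p" and s_unit: "\<bar>s\<bar> = 1"
begin

lemma transversal_1:
  shows "shift z i s \<in> Gn_V n" and "\<delta> (shift z i s) = 1"
  using z_in_Gn_V \<delta>_near_pair[OF i_less_n s_unit] i_neq_p by auto

lemma transversal_1_steps:
  assumes "l < n" "\<bar>t\<bar> = 1"
  shows "\<delta> (shift (shift z i s) l t) = 0 \<Longrightarrow> l = i \<and> t = - s"
    and "\<delta> (shift (shift z i s) l t) = 1 \<Longrightarrow> l = p \<and> t = \<sigma>"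
proof -
  let ?a = "shift z i s"
  assume "\<delta> (shift ?a l t) = 0"
  moreover have "\<delta> (shift ?a i (- s)) = 0" using z_in_C by simp
  ultimately have "(i, - s) \<in> level_steps ?a 0" "(l, t) \<in> level_steps ?a 0"
    using assms i_less_n s_unit by (simp_all add: level_steps_def)
  moreover have "alpha (\<delta> ?a) 0 = 1"
    using transversal_1(2) c1 by simp
  ultimately show "l = i \<and> t = - s"
    using level_step_unique[OF transversal_1(1) le0] by blast
next
  let ?a = "shift z i s"
  assume "\<delta> (shift ?a l t) = 1"
  moreover have "\<delta> (shift ?a p \<sigma>) = 1"
    using \<delta>_near_partner[OF i_less_n i_neq_p s_unit] shift_commute[OF i_neq_p] by simp
  ultimately show "l = p \<and> t = \<sigma>"
    using same_level_step_unique[OF transversal_1(1) p_less_n \<sigma>_unit _ assms] transversal_1(2)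
    by (simp only:)
qed

lemma transversal_2_eq: "shift (shift z i s) i s = shift z i (2 * s)"
  by (simp only: mult_2 shift_shift_same)

lemma transversal_2:
  shows "shift z i (2 * s) \<in> Gn_V n" and "\<delta> (shift z i (2 * s)) = 2"
    and "\<delta> (shift (shift z i (2 * s)) p \<sigma>) = 2"
proof -
  let ?a = "shift z i s"
  show "shift z i (2 * s) \<in> Gn_V n" using z_in_Gn_V by simp
  have "\<delta> (shift ?a i s) \<noteq> 0"
    using transversal_1_steps(1)[OF i_less_n s_unit] unit_neq_uminus[OF s_unit] by blast
  moreover have "\<delta> (shift ?a i s) \<noteq> 1"
    using transversal_1_steps(2)[OF i_less_n s_unit] i_neq_p by blast
  moreover have "\<delta> (shift ?a i s) \<le> 2"
    using \<delta>_shift_bounds[OF transversal_1(1) i_less_n s_unit] transversal_1(2) by simp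
  ultimately show v: "\<delta> (shift z i (2 * s)) = 2"
    unfolding transversal_2_eq[symmetric] by simp
  have "\<delta> (shift ?a p \<sigma>) = \<delta> ?a"
    using \<delta>_near_partner[OF i_less_n i_neq_p s_unit] transversal_1(2) i_neq_p
    by (simp add: shift_commute)
  then have "\<delta> (shift (shift ?a p \<sigma>) i s) = \<delta> (shift ?a i s)"
    by (rule \<delta>_shift_across_level_edge[OF transversal_1(1) p_less_n \<sigma>_unit _ i_less_n i_neq_p s_unit])
  then show "\<delta> (shift (shift z i (2 * s)) p \<sigma>) = 2"
    using v i_neq_p unfolding transversal_2_eq[symmetric] by (simp add: shift_commute)
qed

lemma transversal_2_step:
  assumes l: "l < n" "l \<noteq> i" "\<bar>t\<bar> = 1" "(l, t) \<noteq> (p, \<sigma>)"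
  shows "\<delta> (shift (shift z i (2 * s)) l t) = 3"
proof -
  let ?a = "shift z i s" and ?v = "shift z i (2 * s)"
  let ?w = "shift ?a l t" and ?b = "shift z l t"
  have w: "?w \<in> Gn_V n" "\<delta> ?w = 2"
  proof -
    show "?w \<in> Gn_V n" using z_in_Gn_V by simp
    have "\<delta> ?w \<noteq> 0" using transversal_1_steps(1)[OF l(1,3)] l(2) by blast
    moreover have "\<delta> ?w \<noteq> 1" using transversal_1_steps(2)[OF l(1,3)] l(4) by blast
    moreover have "\<delta> ?w \<le> 2"
      using \<delta>_shift_bounds[OF transversal_1(1) l(1,3)] transversal_1(2) by simp
    ultimately show "\<delta> ?w = 2" by simp
  qed
  have "\<delta> (shift ?v l t) \<noteq> 1"
  proof
    assume v1: "\<delta> (shift ?v l t) = 1"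
    have "shift ?w i s = shift ?v l t"
      using shift_commute[OF l(2)] transversal_2_eq by metis
    then have "(i, s) \<in> level_steps ?w 1"
      using v1 i_less_n s_unit by (intro level_stepsI) simp_all
    moreover have "(l, - t) \<in> level_steps ?w 1"
      using transversal_1(2) l by (intro level_stepsI) simp_all
    moreover have "shift ?w i (- s) = ?b"
      using shift_commute[OF l(2), of "shift z i s" t "- s"] by simp
    then have "(i, - s) \<in> level_steps ?w 1"
      using \<delta>_near_pair[OF l(1,3,4)] i_less_n s_unit by (intro level_stepsI) simp_all
    ultimately have "{(i, s), (l, - t), (i, - s)} \<subseteq> level_steps ?w 1"
      by simp
    then have "card {(i, s), (l, - t), (i, - s)} \<le> card (level_steps ?w 1)"
      by (rule card_mono[OF finite_level_steps])
    moreover have "card {(i, s), (l, - t), (i, - s)} = 3"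
      using l(2) unit_neq_uminus[OF s_unit] by simp
    moreover have "card (level_steps ?w 1) = 2"
      using card_level_steps[OF w(1)] w(2) c2 rho_ge_2 by simp
    ultimately show False by simp
  qed
  moreover have "\<delta> (shift ?v l t) \<noteq> 2"
  proof
    assume "\<delta> (shift ?v l t) = 2"
    then have "l = p \<and> t = \<sigma>"
      using same_level_step_unique[OF transversal_2(1) p_less_n \<sigma>_unit _ l(1,3)] transversal_2(2,3)
      by (simp only:)
    with l(4) show False by simp
  qed
  moreover have "1 \<le> \<delta> (shift ?v l t)" "\<delta> (shift ?v l t) \<le> 3"
    using \<delta>_shift_bounds[OF transversal_2(1) l(1,3)] transversal_2(2) by simp_all
  ultimately show ?thesis by linarith
qed

lemma transversal_3:
  shows "shift z i (3 * s) \<in> Gn_V n" and "\<delta> (shift z i (3 * s)) = 1"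
proof -
  let ?v = "shift z i (2 * s)"
  show "shift z i (3 * s) \<in> Gn_V n" using z_in_Gn_V by simp
  have "level_steps ?v 1 \<subseteq> {(i, s), (i, - s)}"
  proof
    fix st assume st: "st \<in> level_steps ?v 1"
    obtain l t where lt: "st = (l, t)" by (cases st)
    have l: "l < n" "\<bar>t\<bar> = 1" and v1: "\<delta> (shift ?v l t) = 1"
      using st by (simp_all add: lt level_steps_def)
    have "l = i"
    proof (rule ccontr)
      assume "l \<noteq> i"
      then have "(l, t) \<noteq> (p, \<sigma>) \<Longrightarrow> \<delta> (shift ?v l t) = 3"
        using transversal_2_step[OF l(1) _ l(2)] by blast
      then show False
        using transversal_2(3) v1 by (cases "(l, t) = (p, \<sigma>)") auto
    qed
    moreover have "t = s \<or> t = - s"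
      using unit_cases[OF l(2) s_unit] .
    ultimately show "st \<in> {(i, s), (i, - s)}" using lt by auto
  qed
  moreover have "card (level_steps ?v 1) = card {(i, s), (i, - s)}"
    using card_level_steps[OF transversal_2(1)] transversal_2(2) c2 rho_ge_2 unit_neq_uminus[OF s_unit] by simp
  ultimately have "level_steps ?v 1 = {(i, s), (i, - s)}"
    by (intro card_subset_eq) simp_all
  then have "(i, s) \<in> level_steps ?v 1"
    by simp
  moreover have "shift ?v i s = shift z i (3 * s)"
    by simp
  ultimately show "\<delta> (shift z i (3 * s)) = 1"
    by (simp add: level_steps_def)
qed

lemma transversal_period: "shift z i (4 * s) \<in> C"
proof -
  let ?v = "shift z i (2 * s)" and ?x = "shift z i (3 * s)"
  have x_back: "shift ?x i (- s) = ?v"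
    by simp
  have "\<delta> (shift ?x i (- (- s))) = 0"
  proof (rule forced_line_step[OF transversal_3(1) i_less_n _ le0])
    show "\<bar>- s\<bar> = 1" "1 \<le> alpha (\<delta> ?x) 0"
      using s_unit transversal_3(2) c1 by simp_all
    show "\<delta> (shift ?x i (- s)) \<noteq> 0"
      using transversal_2(2) x_back by simp
  next
    fix l and t :: int assume l: "l < n" "l \<noteq> i" "\<bar>t\<bar> = 1"
    have "2 \<le> \<delta> (shift ?v l t)"
    proof (cases "(l, t) = (p, \<sigma>)")
      case True
      then show ?thesis using transversal_2(3) by simp
    next
      case False
      then show ?thesis using transversal_2_step[OF l] by simp
    qed
    moreover have "shift ?x l t = shift (shift ?v l t) i s"
      using shift_commute[OF l(2), of ?v t s] by simp
    ultimately show "\<delta> (shift ?x l t) \<noteq> 0"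
      using \<delta>_shift_bounds(2)[of "shift ?v l t" i s] transversal_2(1) i_less_n s_unit by simp
  qed
  moreover have "shift ?x i (- (- s)) = shift z i (4 * s)"
    by simp
  ultimately show ?thesis
    using \<delta>_eq_0_iff z_in_Gn_V by simp
qed

end

end

context grid_CRC
begin

lemma grid_CRC_pairI:
  "z \<in> C \<Longrightarrow> p < n \<Longrightarrow> \<bar>\<sigma>\<bar> = 1 \<Longrightarrow> shift z p \<sigma> \<in> C \<Longrightarrow> grid_CRC_pair n C rho alpha z p \<sigma>"
  using grid_CRC_axioms by (simp add: grid_CRC_pair_def grid_CRC_pair_axioms_def)

lemma codeword_shift_4:
  assumes z: "z \<in> C" and i: "i < n" "\<bar>s\<bar> = 1"
  shows "shift z i (4 * s) \<in> C"
proof -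
  have "z \<in> Gn_V n" using z C_subset by blast
  then obtain p \<sigma> where p: "p < n" "\<bar>\<sigma>\<bar> = 1" "\<delta> (shift z p \<sigma>) = 0"
    using level_step_exists[of z 0] z alpha_diag by auto
  then have partner: "shift z p \<sigma> \<in> C"
    using \<delta>_eq_0_iff \<open>z \<in> Gn_V n\<close> by simp
  interpret grid_CRC_pair n C rho alpha z p \<sigma>
    using grid_CRC_pairI[OF z p(1,2) partner] .
  consider "i \<noteq> p" | "i = p" "s = - \<sigma>" | "i = p" "s = \<sigma>"
    using unit_cases[OF i(2) p(2)] by blast
  then show ?thesis
  proof cases
    case 1
    then show ?thesis using transversal_period i by blast
  next
    case 2
    then show ?thesis using codewords_behind_pair(2) by simp
  next
    case 3
    have "grid_CRC_pair n C rho alpha (shift z p \<sigma>) p (- \<sigma>)"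
      using grid_CRC_pairI[OF partner p(1)] p(2) z by simp
    then have "shift (shift z p \<sigma>) p (-3 * - \<sigma>) \<in> C"
      by (rule grid_CRC_pair.codewords_behind_pair(1))
    with 3 show ?thesis by (simp add: algebra_simps)
  qed
qed

lemma codeword_shift_4_multiple: "z \<in> C \<Longrightarrow> i < n \<Longrightarrow> shift z i (4 * k) \<in> C"
proof (induction k rule: int_induct[where k = 0])
  case (step1 k)
  then have "shift (shift z i (4 * k)) i (4 * 1) \<in> C"
    using codeword_shift_4[of "shift z i (4 * k)" i 1] by simp
  then show ?case by (simp add: algebra_simps)
next
  case (step2 k)
  then have "shift (shift z i (4 * k)) i (4 * -1) \<in> C"
    using codeword_shift_4[of "shift z i (4 * k)" i "-1"] by simp
  then show ?case by (simp add: algebra_simps)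
qed simp

lemma codeword_mod_4_closed:
  assumes x: "x \<in> C" and y: "y \<in> Gn_V n" and cong: "\<forall>i<n. x ! i mod 4 = y ! i mod 4"
  shows "y \<in> C"
proof -
  have len: "length x = n" "length y = n"
    using x y C_subset by (auto simp: Gn_V_def)
  define w where "w m = map (\<lambda>k. if k < m then y ! k else x ! k) [0..<n]" for m
  have "w m \<in> C" if "m \<le> n" for m
    using that
  proof (induction m)
    case 0
    have "w 0 = x" unfolding w_def using len by (intro nth_equalityI) auto
    then show ?case using x by simp
  next
    case (Suc m)
    obtain k where k: "y ! m - x ! m = 4 * k"
      using cong Suc.prems by (metis dvd_def mod_eq_dvd_iff Suc_le_eq)
    have "w (Suc m) = shift (w m) m (4 * k)"
      unfolding w_def using Suc.prems k by (intro nth_equalityI) (auto simp: nth_shift)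
    then show ?case
      using codeword_shift_4_multiple Suc by simp
  qed
  moreover have "w n = y"
    unfolding w_def using len by (intro nth_equalityI) auto
  ultimately show ?thesis by auto
qed

lemma C_eq_tau_preimage: "C = {x \<in> Gn_V n. tau x \<in> tau ` C}"
proof (intro equalityI subsetI)
  fix x assume "x \<in> {x \<in> Gn_V n. tau x \<in> tau ` C}"
  then obtain c where x: "x \<in> Gn_V n" and c: "c \<in> C" "tau c = tau x" by auto
  then have "\<forall>k<n. c ! k mod 4 = x ! k mod 4"
    using tau_eq_iff[of c x] C_subset by (auto simp: Gn_V_def)
  then show "x \<in> C"
    using codeword_mod_4_closed[OF c(1) x] by blast
qed (use C_subset in auto)

end

theorem mainTheorem10:
  fixes n rho :: nat and C :: "int list set" and alpha :: "nat \<Rightarrow> nat \<Rightarrow> nat"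
  assumes "n \<ge> 1"
    and "is_CRC (Gn_V n) Gn_adj C rho alpha"
    and "all_ones rho alpha"
    and "rho \<ge> 2"
    and "alpha 1 0 = 1"
    and "alpha 2 1 = 2"
  shows "\<exists>D. is_CRC (H_V (2 * n)) H_adj D rho alpha \<and>
             C = {x \<in> Gn_V n. tau x \<in> D}"
proof -
  interpret grid_CRC n C rho alpha
    using assms by unfold_locales
  interpret graph_covering "Gn_V n" Gn_adj "H_V (2 * n)" H_adj tau
    by (rule tau_graph_covering)
  show ?thesis
    using is_CRC_image[OF C_eq_tau_preimage assms(2)] C_eq_tau_preimage by blast
qed

end
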